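(* Let $k\ge2$, $M\ge1$, $N\ge1$, and let $g\colon[N]^M\to\{0,1\}^k$ be a function such that no single input coordinate affects all $k$ output bits of $g$. Let $\mathbf{Z}=g(\mathbf{U}_{[N]}^M)$. Then at least one of the following holds: (1) $\Pr[\mathbf{Z}\notin\{0^k,1^k\}]\ge \frac{1}{100k}$; or (2) there is $z\in\{0^k,1^k\}$ with $\Pr[\mathbf{Z}=z]\ge 2/3$.
   Context: $\mathbf{U}_{[N]}^M$ is the uniform distribution on $[N]^M$. An input coordinate affects an output bit if that bit depends on the coordinate (i.e., changing only that coordinate can change the bit). *)

theory Defs
  imports "HOL-Probability.Probability"
begin

text \<open>Inputs: [N]^M, with [N] = {1..N}, represented as extensional functions on the
index set {..<M}. Outputs in {0,1}^k represented as extensional bool-valued functions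
on {..<k} (True = 1).\<close>

definition inputs :: "nat \<Rightarrow> nat \<Rightarrow> (nat \<Rightarrow> nat) set" where
  "inputs M N = PiE {..<M} (\<lambda>_. {1..N})"

definition outputs :: "nat \<Rightarrow> (nat \<Rightarrow> bool) set" where
  "outputs k = PiE {..<k} (\<lambda>_. UNIV)"

definition affects :: "nat \<Rightarrow> nat \<Rightarrow> ((nat \<Rightarrow> nat) \<Rightarrow> (nat \<Rightarrow> bool)) \<Rightarrow> nat \<Rightarrow> nat \<Rightarrow> bool" where
  "affects M N g i j \<longleftrightarrow>
     (\<exists>x\<in>inputs M N. \<exists>y\<in>inputs M N. (\<forall>l. l \<noteq> i \<longrightarrow> x l = y l) \<and> g x j \<noteq> g y j)"

definition const_str :: "nat \<Rightarrow> bool \<Rightarrow> (nat \<Rightarrow> bool)" where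
  "const_str k b = (\<lambda>j. if j < k then b else undefined)"

definition Zdist :: "nat \<Rightarrow> nat \<Rightarrow> ((nat \<Rightarrow> nat) \<Rightarrow> (nat \<Rightarrow> bool)) \<Rightarrow> (nat \<Rightarrow> bool) pmf" where
  "Zdist M N g = map_pmf g (pmf_of_set (inputs M N))"

end

theory Submission
  imports Defs
begin

text \<open>Let A, B and C be the inputs mapped to 0^k, to 1^k and to anything else. Assign to every
coordinate i an output bit f i that it does not affect. For x \<in> A and y \<in> B, the hybrid H j
takes the coordinates i with f i < j from y and the others from x, so H 0 = x and H k = y. Going
from H j to H (j+1) only changes coordinates that do not affect bit j, so bit j is kept and
the walk cannot jump from 0^k straight to 1^k: some H j with 0 < j < k lies in C. Since the map
(x, y) \<mapsto> (H j, complementary hybrid) is injective, at most |C| N^M pairs send H j into C,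
whence Pr[0^k] Pr[1^k] \<le> (k - 1) Pr[C]. If both constants had probability below 2/3 and
Pr[C] < 1/(100k), both would exceed 3/10, giving 9/100 < (k - 1) Pr[C] < 1/100.\<close>

definition splice :: "('i \<Rightarrow> bool) \<Rightarrow> ('i \<Rightarrow> 'a) \<Rightarrow> ('i \<Rightarrow> 'a) \<Rightarrow> 'i \<Rightarrow> 'a" where
  "splice P x y = (\<lambda>i. if P i then y i else x i)"

lemma splice_in_PiE:
  assumes "x \<in> PiE I S" "y \<in> PiE I S"
  shows "splice P x y \<in> PiE I S"
  using assms by (auto simp: splice_def PiE_iff extensional_def)

lemma splice_splice_swap:
  "splice P (splice P x y) (splice P y x) = x"
  by (auto simp: splice_def)

lemma card_splice_preimage_le:
  fixes S :: "'i \<Rightarrow> 'a set"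
  assumes "finite (PiE I S)"
  shows "card {(x, y) \<in> PiE I S \<times> PiE I S. splice P x y \<in> C}
    \<le> card (C \<inter> PiE I S) * card (PiE I S)"
proof -
  define X where "X = PiE I S"
  define h :: "('i \<Rightarrow> 'a) \<times> ('i \<Rightarrow> 'a) \<Rightarrow> _"
    where "h = (\<lambda>(x, y). (splice P x y, splice P y x))"
  have "inj_on h T" for T
    by (rule inj_on_inverseI[where g = h]) (auto simp: h_def splice_splice_swap)
  moreover have "h ` {(x, y) \<in> X \<times> X. splice P x y \<in> C} \<subseteq> (C \<inter> X) \<times> X"
    unfolding h_def X_def by (clarsimp simp: splice_in_PiE)
  ultimately have "card {(x, y) \<in> X \<times> X. splice P x y \<in> C} \<le> card ((C \<inter> X) \<times> X)"
    using assms by (intro card_inj_on_le) (auto simp: X_def inj_on_subset)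
  then show ?thesis by (simp add: X_def card_cartesian_product)
qed

lemma const_str_False_neq_True: "k > 0 \<Longrightarrow> const_str k False \<noteq> const_str k True"
  by (metis const_str_def)

lemma seq_leaves_pair_without_direct_step:
  fixes s :: "nat \<Rightarrow> 'a"
  assumes "s 0 = a" "s n = b" "a \<noteq> b"
    and no_jump: "\<And>j. j < n \<Longrightarrow> s j = a \<Longrightarrow> s (Suc j) \<noteq> b"
  shows "\<exists>j\<in>{1..<n}. s j \<notin> {a, b}"
proof (rule ccontr)
  assume stays: "\<not> ?thesis"
  have "s j = a" if "j \<le> n" for j
    using that
  proof (induction j)
    case 0
    show ?case using assms(1) .
  next
    case (Suc j)
    then have "s (Suc j) \<noteq> b" using no_jump by simp
    moreover have "Suc j \<noteq> n" using calculation assms(2) by auto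
    then have "Suc j \<in> {1..<n}" using Suc.prems by simp
    then have "s (Suc j) \<in> {a, b}" using stays by blast
    ultimately show ?case by simp
  qed
  then show False using assms(2,3) by auto
qed

lemma bit_eq_if_differ_on_unaffecting:
  assumes "finite D" "u \<in> inputs M N" "v \<in> inputs M N"
    and "\<forall>l. l \<notin> D \<longrightarrow> u l = v l" "\<forall>i\<in>D. \<not> affects M N g i j"
  shows "g u j = g v j"
  using assms
proof (induction D arbitrary: u rule: finite_induct)
  case empty
  then show ?case by (metis ext empty_iff)
next
  case (insert i D)
  define w where "w = u(i := v i)"
  have "w \<in> inputs M N"
    using insert.prems(1,2) unfolding w_def inputs_def
    by (cases "i < M") (auto simp: PiE_iff extensional_def)
  then have "g w j = g v j"
    using insert.prems(2-4) by (intro insert.IH[OF \<open>w \<in> inputs M N\<close>]) (auto simp: w_def)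
  moreover have "\<forall>l. l \<noteq> i \<longrightarrow> u l = w l"
    by (simp add: w_def)
  then have "g u j = g w j"
    using \<open>w \<in> inputs M N\<close> insert.prems(1,4) unfolding affects_def by blast
  ultimately show ?case by simp
qed

lemma hybrid_path_leaves_constants:
  assumes f: "\<forall>i. f i < k" "\<forall>i<M. \<not> affects M N g i (f i)"
    and x: "x \<in> inputs M N" "g x = const_str k False"
    and y: "y \<in> inputs M N" "g y = const_str k True"
  shows "\<exists>j\<in>{1..<k}. g (splice (\<lambda>i. f i < j) x y) \<notin> {const_str k False, const_str k True}"
proof (rule seq_leaves_pair_without_direct_step)
  define H where "H j = splice (\<lambda>i. f i < j) x y" for j
  have H_in: "H j \<in> inputs M N" for j
    using x(1) y(1) unfolding H_def inputs_def by (rule splice_in_PiE)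
  have "H 0 = x" "H k = y"
    using f(1) by (simp_all add: H_def splice_def)
  then show "g (H 0) = const_str k False" "g (H k) = const_str k True"
    using x(2) y(2) by simp_all
  show "const_str k False \<noteq> const_str k True"
    using f(1) by (intro const_str_False_neq_True) (cases k, auto)
  have bit_kept: "g (H (Suc j)) j = g (H j) j" for j
  proof (rule bit_eq_if_differ_on_unaffecting[OF _ H_in H_in])
    show "finite {i. i < M \<and> f i = j}" by simp
    show "\<forall>i\<in>{i. i < M \<and> f i = j}. \<not> affects M N g i j" using f(2) by auto
    show "\<forall>l. l \<notin> {i. i < M \<and> f i = j} \<longrightarrow> H (Suc j) l = H j l"
    proof (intro allI impI)
      fix l assume "l \<notin> {i. i < M \<and> f i = j}"
      moreover have "x l = y l" if "l \<notin> {..<M}"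
        using PiE_arb[OF x(1)[unfolded inputs_def] that] PiE_arb[OF y(1)[unfolded inputs_def] that]
        by simp
      ultimately show "H (Suc j) l = H j l"
        by (cases "l < M") (simp_all add: H_def splice_def less_Suc_eq)
    qed
  qed
  show "g (H (Suc j)) \<noteq> const_str k True" if "j < k" "g (H j) = const_str k False" for j
  proof
    assume "g (H (Suc j)) = const_str k True"
    then have "g (H (Suc j)) j"
      using \<open>j < k\<close> by (simp add: const_str_def)
    then show False
      using that unfolding bit_kept by (simp add: const_str_def)
  qed
qed

lemma card_const_preimages_product_le:
  assumes "k \<ge> 1" "\<forall>i<M. \<exists>j<k. \<not> affects M N g i j"
  defines "X \<equiv> inputs M N"
  shows "card {x\<in>X. g x = const_str k False} * card {x\<in>X. g x = const_str k True}
    \<le> (k - 1) * card {x\<in>X. g x \<notin> {const_str k False, const_str k True}} * card X"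
proof -
  define A where "A = {x\<in>X. g x = const_str k False}"
  define B where "B = {x\<in>X. g x = const_str k True}"
  define C where "C = {x\<in>X. g x \<notin> {const_str k False, const_str k True}}"
  have "\<exists>j. j < k \<and> (i < M \<longrightarrow> \<not> affects M N g i j)" for i
  proof (cases "i < M")
    case True
    then show ?thesis using assms(2) by blast
  next
    case False
    then show ?thesis using assms(1) by (intro exI[of _ 0]) simp
  qed
  then obtain f where "\<forall>i. f i < k \<and> (i < M \<longrightarrow> \<not> affects M N g i (f i))"
    using choice[of "\<lambda>i j. j < k \<and> (i < M \<longrightarrow> \<not> affects M N g i j)"] by blast
  then have f: "\<forall>i<M. \<not> affects M N g i (f i)" "\<forall>i. f i < k"
    by simp_all
  define Q where "Q j = {(x, y) \<in> X \<times> X. splice (\<lambda>i. f i < j) x y \<in> C}" for j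
  have finX: "finite X" by (simp add: X_def inputs_def finite_PiE)
  have "A \<times> B \<subseteq> (\<Union>j\<in>{1..<k}. Q j)"
  proof clarify
    fix x y assume "x \<in> A" "y \<in> B"
    then have xy: "x \<in> X" "g x = const_str k False" "y \<in> X" "g y = const_str k True"
      by (simp_all add: A_def B_def)
    then obtain j where "j \<in> {1..<k}"
      and "g (splice (\<lambda>i. f i < j) x y) \<notin> {const_str k False, const_str k True}"
      using hybrid_path_leaves_constants[OF f(2,1)] unfolding X_def by blast
    moreover have "splice (\<lambda>i. f i < j) x y \<in> X"
      using xy(1,3) unfolding X_def inputs_def by (rule splice_in_PiE)
    ultimately show "(x, y) \<in> (\<Union>j\<in>{1..<k}. Q j)"
      using xy(1,3) unfolding Q_def C_def by blast
  qed
  moreover have "finite (\<Union>j\<in>{1..<k}. Q j)"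
  proof (intro finite_UN_I)
    show "finite (Q j)" for j
      by (rule finite_subset[of _ "X \<times> X"]) (use finX in \<open>auto simp: Q_def\<close>)
  qed simp
  ultimately have "card A * card B \<le> card (\<Union>j\<in>{1..<k}. Q j)"
    unfolding card_cartesian_product[symmetric] by (rule card_mono[rotated])
  also have "\<dots> \<le> (\<Sum>j\<in>{1..<k}. card (Q j))"
    by (rule card_UN_le) simp
  also have "\<dots> \<le> (\<Sum>j\<in>{1..<k}. card C * card X)"
  proof (rule sum_mono)
    have "C \<inter> X = C" by (auto simp: C_def)
    then show "card (Q j) \<le> card C * card X" for j
      using card_splice_preimage_le[of "{..<M}" "\<lambda>_. {1..N}" "\<lambda>i. f i < j" C] finX
      unfolding Q_def X_def inputs_def by simp
  qed
  finally show ?thesis by (simp add: A_def B_def C_def)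
qed

lemma product_bound_dichotomy:
  fixes a b c K :: real
  assumes "a + b + c = 1" "c \<ge> 0" "K \<ge> 1" "a * b \<le> (K - 1) * c"
  shows "c \<ge> 1 / (100 * K) \<or> a \<ge> 2 / 3 \<or> b \<ge> 2 / 3"
proof (rule ccontr)
  assume "\<not> ?thesis"
  then have c: "c < 1 / (100 * K)" and "a < 2 / 3" "b < 2 / 3" by auto
  have "K * c < 1 / 100"
    using mult_strict_left_mono[OF c, of K] assms(3) by simp
  moreover have "c \<le> K * c"
    using mult_right_mono[of 1 K c] assms(2,3) by simp
  ultimately have "a > 3 / 10" "b > 3 / 10"
    using assms(1) \<open>a < 2 / 3\<close> \<open>b < 2 / 3\<close> by auto
  then have "(3 / 10) * (3 / 10) < a * b"
    by (intro mult_strict_mono) auto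
  moreover have "(K - 1) * c \<le> K * c"
    using assms(2) by (simp add: left_diff_distrib)
  ultimately show False
    using assms(4) \<open>K * c < 1 / 100\<close> by linarith
qed

lemma finite_inputs: "finite (inputs M N)"
  by (simp add: inputs_def finite_PiE)

lemma inputs_nonempty: "N \<ge> 1 \<Longrightarrow> inputs M N \<noteq> {}"
  by (simp add: inputs_def PiE_eq_empty_iff)

lemma prob_Zdist:
  assumes "N \<ge> 1"
  shows "measure_pmf.prob (Zdist M N g) S = card {x \<in> inputs M N. g x \<in> S} / card (inputs M N)"
proof -
  have "measure_pmf.prob (Zdist M N g) S = measure_pmf.prob (pmf_of_set (inputs M N)) (g -` S)"
    by (simp add: Zdist_def)
  also have "\<dots> = card (inputs M N \<inter> g -` S) / card (inputs M N)"
    using assms finite_inputs inputs_nonempty by (simp add: measure_pmf_of_set)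
  finally show ?thesis
    by (simp add: Int_def)
qed

lemma prob_two_points_compl:
  fixes p :: "'a pmf"
  assumes "a \<noteq> b"
  shows "measure_pmf.prob p {a} + measure_pmf.prob p {b} + measure_pmf.prob p (- {a, b}) = 1"
proof -
  have "measure_pmf.prob p {a, b} = measure_pmf.prob p {a} + measure_pmf.prob p {b}"
    using assms by (simp add: measure_measure_pmf_finite)
  moreover have "measure_pmf.prob p (- {a, b}) = 1 - measure_pmf.prob p {a, b}"
    using measure_pmf.prob_compl[of "{a, b}" p] by (simp add: Compl_eq_Diff_UNIV)
  ultimately show ?thesis by simp
qed

lemma prob_const_product_le:
  assumes "k \<ge> 1" "N \<ge> 1" "\<forall>i<M. \<exists>j<k. \<not> affects M N g i j"
  defines "P \<equiv> measure_pmf.prob (Zdist M N g)"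
    and "c0 \<equiv> const_str k False" and "c1 \<equiv> const_str k True"
  shows "P {c0} * P {c1} \<le> (real k - 1) * P (- {c0, c1})"
proof -
  define X where "X = inputs M N"
  define n where "n = real (card X)"
  have "n > 0"
    using assms(2) finite_inputs inputs_nonempty by (simp add: n_def X_def card_gt_0_iff)
  have "P {c0} * P {c1} = real (card {x\<in>X. g x = c0} * card {x\<in>X. g x = c1}) / n\<^sup>2"
    by (simp add: P_def prob_Zdist[OF assms(2)] X_def n_def power2_eq_square)
  also have "\<dots> \<le> real ((k - 1) * card {x\<in>X. g x \<notin> {c0, c1}} * card X) / n\<^sup>2"
    using card_const_preimages_product_le[OF assms(1,3)]
    by (intro divide_right_mono of_nat_mono) (simp_all add: X_def c0_def c1_def)
  also have "\<dots> = (real k - 1) * P (- {c0, c1})"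
    using \<open>n > 0\<close> assms(1)
    by (simp add: P_def prob_Zdist[OF assms(2)] X_def n_def power2_eq_square)
  finally show ?thesis .
qed

theorem claim5:
  fixes k M N :: nat and g :: "(nat \<Rightarrow> nat) \<Rightarrow> (nat \<Rightarrow> bool)"
  assumes "k \<ge> 2" and "M \<ge> 1" and "N \<ge> 1"
    and "\<forall>x\<in>inputs M N. g x \<in> outputs k"
    and "\<forall>i<M. \<exists>j<k. \<not> affects M N g i j"
  shows "measure_pmf.prob (Zdist M N g) (- {const_str k False, const_str k True}) \<ge> 1 / (100 * real k)
    \<or> (\<exists>z\<in>{const_str k False, const_str k True}. measure_pmf.prob (Zdist M N g) {z} \<ge> 2 / 3)"
proof -
  define P where "P = measure_pmf.prob (Zdist M N g)"
  define c0 c1 where "c0 = const_str k False" and "c1 = const_str k True"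
  have "c0 \<noteq> c1"
    using assms(1) unfolding c0_def c1_def by (intro const_str_False_neq_True) simp
  have "P {c0} * P {c1} \<le> (real k - 1) * P (- {c0, c1})"
    using assms(1,3,5) unfolding P_def c0_def c1_def by (intro prob_const_product_le) auto
  moreover have "P {c0} + P {c1} + P (- {c0, c1}) = 1"
    unfolding P_def using \<open>c0 \<noteq> c1\<close> by (rule prob_two_points_compl)
  ultimately have "P (- {c0, c1}) \<ge> 1 / (100 * real k) \<or> P {c0} \<ge> 2 / 3 \<or> P {c1} \<ge> 2 / 3"
    using assms(1) by (intro product_bound_dichotomy) (auto simp: P_def)
  then show ?thesis
    unfolding P_def c0_def c1_def by auto
qed

end
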